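(* Assume $\phi_1>\alpha(C_s+C_m)$. There exists $\bar\pi>0$ such that for every $\pi>\bar\pi$, $$\tilde U_M(\mathbf r,\pi)<\tilde U_M(\mathbf r^{id},\pi)\quad\text{for all }\mathbf r\in\mathcal R_e\text{ with }\mathbf r\neq\mathbf r^{id}.$$
   Context: Supply-chain model. The parameters are a price-sensitivity $\alpha\in(0,1]$, a manufacturer's per-unit production cost $C_m\ge 0$, and a supplier's per-unit procurement cost $C_s\ge 0$. For $x\in\mathbb R$ write $x^+=\max\{0,x\}$. The market potential takes values in $\{\phi_1,\dots,\phi_L\}$ with $\phi_1<\phi_2<\dots<\phi_L$, with respective probabilities $\sigma_1,\dots,\sigma_L>0$ summing to $1$. Greedy misreporting policies. $\mathcal R_e$ is the set of $L\times L$ matrices $\mathbf r=(r_{ij})$ such that $r_{ij}\ge0$ for all $i,j$, $r_{ij}=0$ whenever $i<j$, and $\sum_j r_{ij}=1$ for every $i$. Here $r_{ij}$ is the probability of reporting $\phi_j$ when the true potential is $\phi_i$, so a greedy manufacturer only under-reports. $\mathbf r^{id}$ denotes the identity matrix, i.e. truthful reporting. Further notation. Define $$f(\mathbf r)=\sum_{i\ge j}\sigma_i(\phi_i-\phi_j)r_{ij}$$ and $$h_{ij}=\frac{2\phi_i-\phi_j-\alpha(C_m+C_s)}{4\sqrt\alpha}.$$ For a penalty parameter $\pi\ge0$, the manufacturer's limiting utility under misreporting policy $\mathbf r$ and punitive policy $\pi$ is $$\tilde U_M(\mathbf r,\pi)=\sum_{i\ge j}\sigma_i\,r_{ij}\Big(\big[h_{ij}-\pi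 f(\mathbf r)\big]^+\Big)^2 .$$ *)

theory Defs
  imports "HOL-Analysis.Analysis"
begin

text \<open>Indices are 0..L-1 (the paper's 1..L shifted). Matrices are functions
  nat => nat => real, only their entries with indices below L matter.\<close>

definition pos_part :: "real \<Rightarrow> real" where
  "pos_part x = max 0 x"

definition greedy_policies :: "nat \<Rightarrow> (nat \<Rightarrow> nat \<Rightarrow> real) set" where
  "greedy_policies L = {r. (\<forall>i<L. \<forall>j<L. r i j \<ge> 0) \<and>
                           (\<forall>i<L. \<forall>j<L. i < j \<longrightarrow> r i j = 0) \<and>
                           (\<forall>i<L. (\<Sum>j<L. r i j) = 1)}"

definition r_id :: "nat \<Rightarrow> nat \<Rightarrow> real" where
  "r_id i j = (if i = j then 1 else 0)"

definition mat_eq :: "nat \<Rightarrow> (nat \<Rightarrow> nat \<Rightarrow> real) \<Rightarrow> (nat \<Rightarrow> nat \<Rightarrow> real) \<Rightarrow> bool" where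
  "mat_eq L r s = (\<forall>i<L. \<forall>j<L. r i j = s i j)"

definition f_mis :: "nat \<Rightarrow> (nat \<Rightarrow> real) \<Rightarrow> (nat \<Rightarrow> real) \<Rightarrow> (nat \<Rightarrow> nat \<Rightarrow> real) \<Rightarrow> real" where
  "f_mis L \<phi> \<sigma> r = (\<Sum>i<L. \<Sum>j\<le>i. \<sigma> i * (\<phi> i - \<phi> j) * r i j)"

definition h_coef :: "real \<Rightarrow> real \<Rightarrow> real \<Rightarrow> (nat \<Rightarrow> real) \<Rightarrow> nat \<Rightarrow> nat \<Rightarrow> real" where
  "h_coef \<alpha> Cm Cs \<phi> i j = (2 * \<phi> i - \<phi> j - \<alpha> * (Cm + Cs)) / (4 * sqrt \<alpha>)"

definition U_M :: "real \<Rightarrow> real \<Rightarrow> real \<Rightarrow> nat \<Rightarrow> (nat \<Rightarrow> real) \<Rightarrow> (nat \<Rightarrow> real)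
                    \<Rightarrow> (nat \<Rightarrow> nat \<Rightarrow> real) \<Rightarrow> real \<Rightarrow> real" where
  "U_M \<alpha> Cm Cs L \<phi> \<sigma> r \<pi> =
     (\<Sum>i<L. \<Sum>j\<le>i. \<sigma> i * r i j *
        (pos_part (h_coef \<alpha> Cm Cs \<phi> i j - \<pi> * f_mis L \<phi> \<sigma> r))\<^sup>2)"

end

theory Submission
  imports Defs
begin

text \<open>Write \<open>h\<^sub>i\<^sub>j = h\<^sub>i\<^sub>i + a\<^sub>i\<^sub>j\<close> with \<open>a\<^sub>i\<^sub>j = (\<phi>\<^sub>i - \<phi>\<^sub>j)/(4\<surd>\<alpha>) \<ge> 0\<close>, so that truthful
  reporting earns \<open>h\<^sub>i\<^sub>i\<^sup>2\<close> in state \<open>i\<close> and the utility of \<open>r\<close> is a weighted mean of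
  \<open>((h\<^sub>i\<^sub>i + a\<^sub>i\<^sub>j - t)\<^sup>+)\<^sup>2\<close>, with weights \<open>\<sigma>\<^sub>i r\<^sub>i\<^sub>j\<close> and \<open>t = \<pi> f(r) > 0\<close> for \<open>r \<noteq> id\<close>.
  With \<open>c = h\<^sub>1\<^sub>1 > 0\<close> and \<open>B\<close> bounding all \<open>h\<^sub>i\<^sub>j\<close>, each term exceeds \<open>h\<^sub>i\<^sub>i\<^sup>2\<close> by at
  most \<open>2 B a\<^sub>i\<^sub>j - c min t c\<close>, so misreporting gains at most \<open>2 B f/(4\<surd>\<alpha>) - c min t c\<close>.
  If \<open>t\<close> exceeds every \<open>a\<^sub>i\<^sub>j + c\<close>, each term instead loses at least \<open>c\<^sup>2\<close>; otherwise
  \<open>c min t c\<close> is at least proportional to \<open>t = \<pi> f\<close>, and for \<open>\<pi>\<close> large it beats the gain,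
  which is linear in \<open>f\<close> with a slope independent of \<open>\<pi>\<close>.\<close>

lemma pos_part_sq_le_sq_diff:
  fixes c x y :: real
  assumes "0 < c" "c \<le> x" "y \<le> x - c"
  shows "(pos_part y)\<^sup>2 \<le> x\<^sup>2 - c\<^sup>2"
proof -
  have "0 \<le> pos_part y" "pos_part y \<le> x - c"
    using assms by (auto simp: pos_part_def)
  then have "(pos_part y)\<^sup>2 \<le> (x - c)\<^sup>2" by (simp add: power_mono)
  also have "\<dots> \<le> x\<^sup>2 - c\<^sup>2"
    using assms by (simp add: power2_eq_square algebra_simps mult_right_mono)
  finally show ?thesis .
qed

lemma pos_part_sq_shift_le:
  fixes c x a t B :: real
  assumes "0 < c" "c \<le> x" "0 \<le> a" "x + a \<le> B" "0 \<le> t"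
  shows "(pos_part (x + a - t))\<^sup>2 \<le> x\<^sup>2 + 2 * B * a - c * min t c"
proof (cases "t \<le> a")
  case True
  let ?y = "x + a - t"
  have "?y\<^sup>2 - x\<^sup>2 = (a - t) * (?y + x)" by (simp add: power2_eq_square algebra_simps)
  also have "\<dots> \<le> (a - t) * (2 * B)" using True assms by (intro mult_left_mono) auto
  finally have "?y\<^sup>2 \<le> x\<^sup>2 + 2 * B * a - 2 * B * t" by (simp add: algebra_simps)
  moreover have "c * min t c \<le> 2 * B * t"
  proof -
    have "c * min t c \<le> c * t" using assms by (intro mult_left_mono) auto
    also have "\<dots> \<le> 2 * B * t" using assms by (intro mult_right_mono) auto
    finally show ?thesis .
  qed
  moreover have "pos_part ?y = ?y" using True assms by (simp add: pos_part_def)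
  ultimately show ?thesis by simp
next
  case False
  have cmin: "c * min t c \<le> c * (t - a) + 2 * B * a"
  proof -
    have "c * min t c \<le> c * t" using assms by (intro mult_left_mono) auto
    moreover have "c * a \<le> 2 * B * a" using assms by (intro mult_right_mono) auto
    ultimately show ?thesis by (simp add: right_diff_distrib)
  qed
  show ?thesis
  proof (cases "x + a - t \<le> 0")
    case True
    have "c * min t c \<le> c * c" using assms by (intro mult_left_mono) auto
    also have "\<dots> \<le> x\<^sup>2" using assms by (simp add: power2_eq_square mult_mono)
    finally have "c * min t c \<le> x\<^sup>2" .
    moreover have "0 \<le> 2 * B * a" using assms by simp
    ultimately show ?thesis using True by (simp add: pos_part_def)
  next
    case y_pos: False
    let ?y = "x + a - t"
    have "(t - a) * c \<le> (t - a) * (x + ?y)" using False y_pos assms by (intro mult_left_mono) auto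
    moreover have "?y\<^sup>2 = x\<^sup>2 - (t - a) * (x + ?y)" by (simp add: power2_eq_square algebra_simps)
    ultimately show ?thesis using y_pos cmin by (simp add: pos_part_def algebra_simps)
  qed
qed

lemma scaled_le_min:
  fixes c t E :: real
  assumes "0 < c" "c \<le> E" "0 \<le> t" "t \<le> E"
  shows "c * t / E \<le> min t c"
proof -
  have "c * t \<le> E * t" "c * t \<le> c * E" using assms by (auto intro: mult_right_mono mult_left_mono)
  then show ?thesis using assms by (simp add: divide_le_eq mult.commute)
qed

lemma linear_gain_less_penalty:
  fixes c B D F p :: real
  assumes "0 < c" "0 \<le> D" "0 < F" "0 < p" "2 * B * (D + c) / c\<^sup>2 < p" "p * F \<le> D + c"
  shows "2 * B * F < c * min (p * F) c"
proof -
  have "2 * B * (D + c) < p * c\<^sup>2" using assms(1,5) by (simp add: divide_less_eq)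
  then have "2 * B * (D + c) * F < p * c\<^sup>2 * F"
    using assms(3) by (intro mult_strict_right_mono)
  then have "2 * B * F < c * (c * (p * F) / (D + c))"
    using assms(1,2) by (simp add: field_simps power2_eq_square)
  also have "\<dots> \<le> c * min (p * F) c"
    using assms by (intro mult_left_mono scaled_le_min) (auto simp: zero_le_mult_iff)
  finally show ?thesis .
qed

lemma weighted_sq_sum_penalised_less:
  fixes w x a :: "'i \<Rightarrow> real" and c B D p :: real
  assumes "finite I"
    and w_nonneg: "\<And>i. i \<in> I \<Longrightarrow> 0 \<le> w i" and w_sum: "(\<Sum>i\<in>I. w i) = 1"
    and "0 < c" and x_ge: "\<And>i. i \<in> I \<Longrightarrow> c \<le> x i"
    and a_nonneg: "\<And>i. i \<in> I \<Longrightarrow> 0 \<le> a i"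
    and a_le: "\<And>i. i \<in> I \<Longrightarrow> a i \<le> D"
    and xa_le: "\<And>i. i \<in> I \<Longrightarrow> x i + a i \<le> B"
    and F_pos: "0 < (\<Sum>i\<in>I. w i * a i)"
    and p_gt: "2 * B * (D + c) / c\<^sup>2 < p"
  shows "(\<Sum>i\<in>I. w i * (pos_part (x i + a i - p * (\<Sum>i\<in>I. w i * a i)))\<^sup>2)
           < (\<Sum>i\<in>I. w i * (x i)\<^sup>2)"
proof -
  define F where "F = (\<Sum>i\<in>I. w i * a i)"
  define t where "t = p * F"
  obtain i0 where "i0 \<in> I" using w_sum by fastforce
  then have "c \<le> B" "0 \<le> D"
    using x_ge a_nonneg a_le xa_le by (meson add_increasing2 order_trans)+
  then have "0 \<le> 2 * B * (D + c) / c\<^sup>2" using \<open>0 < c\<close> by simp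
  then have "0 < p" using p_gt by linarith
  with F_pos have "0 < t" by (simp add: t_def F_def)
  have "(\<Sum>i\<in>I. w i * (pos_part (x i + a i - t))\<^sup>2) < (\<Sum>i\<in>I. w i * (x i)\<^sup>2)"
  proof (cases "D + c \<le> t")
    case True
    have "(\<Sum>i\<in>I. w i * (pos_part (x i + a i - t))\<^sup>2) \<le> (\<Sum>i\<in>I. w i * ((x i)\<^sup>2 - c\<^sup>2))"
    proof (intro sum_mono mult_left_mono pos_part_sq_le_sq_diff)
      fix i assume "i \<in> I"
      then show "0 \<le> w i" "c \<le> x i" "x i + a i - t \<le> x i - c"
        using True w_nonneg x_ge a_le[of i] by auto
    qed (rule \<open>0 < c\<close>)
    also have "\<dots> = (\<Sum>i\<in>I. w i * (x i)\<^sup>2) - c\<^sup>2"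
      by (simp add: right_diff_distrib sum_subtractf sum_distrib_right[symmetric] w_sum)
    also have "\<dots> < (\<Sum>i\<in>I. w i * (x i)\<^sup>2)" using \<open>0 < c\<close> by simp
    finally show ?thesis .
  next
    case False
    have "(\<Sum>i\<in>I. w i * (pos_part (x i + a i - t))\<^sup>2)
        \<le> (\<Sum>i\<in>I. w i * ((x i)\<^sup>2 + 2 * B * a i - c * min t c))"
      using \<open>0 < c\<close> \<open>0 < t\<close> x_ge a_nonneg xa_le w_nonneg
      by (intro sum_mono mult_left_mono pos_part_sq_shift_le) auto
    also have "\<dots> = (\<Sum>i\<in>I. w i * (x i)\<^sup>2) + 2 * B * F - c * min t c"
    proof -
      have "(\<Sum>i\<in>I. w i * (c * min t c)) = c * min t c"
        by (simp add: sum_distrib_right[symmetric] w_sum)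
      then show ?thesis
        by (simp add: F_def right_diff_distrib distrib_left sum.distrib sum_subtractf
            sum_distrib_left mult.left_commute)
    qed
    also have "\<dots> < (\<Sum>i\<in>I. w i * (x i)\<^sup>2)"
      using linear_gain_less_penalty[OF \<open>0 < c\<close> \<open>0 \<le> D\<close> F_pos \<open>0 < p\<close> p_gt] False
      by (simp add: t_def F_def)
    finally show ?thesis .
  qed
  then show ?thesis by (simp add: t_def F_def)
qed

lemma greedy_policies_row_sum:
  assumes "r \<in> greedy_policies L" "i < L"
  shows "(\<Sum>j\<le>i. r i j) = 1"
proof -
  have "(\<Sum>j\<le>i. r i j) = (\<Sum>j<L. r i j)"
    using assms by (intro sum.mono_neutral_left) (auto simp: greedy_policies_def)
  then show ?thesis using assms by (simp add: greedy_policies_def)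
qed

lemma greedy_policies_weighted_sum:
  assumes "r \<in> greedy_policies L"
  shows "(\<Sum>i<L. \<Sum>j\<le>i. \<sigma> i * r i j * g i) = (\<Sum>i<L. \<sigma> i * g i)"
proof -
  have "(\<Sum>i<L. \<Sum>j\<le>i. \<sigma> i * r i j * g i) = (\<Sum>i<L. \<sigma> i * g i * (\<Sum>j\<le>i. r i j))"
    by (simp add: sum_distrib_left mult_ac)
  also have "\<dots> = (\<Sum>i<L. \<sigma> i * g i)"
    using greedy_policies_row_sum[OF assms] by simp
  finally show ?thesis .
qed

lemma greedy_policies_off_diagonal:
  assumes "r \<in> greedy_policies L" "\<not> mat_eq L r r_id"
  obtains i j where "j < i" "i < L" "0 < r i j"
proof -
  have nonneg: "0 \<le> r i j" if "i < L" "j < L" for i j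
    using assms(1) that by (simp add: greedy_policies_def)
  obtain i j where ij: "i < L" "j < L" "r i j \<noteq> r_id i j"
    using assms(2) by (auto simp: mat_eq_def)
  consider "i < j" | "j < i" | "j = i" by linarith
  then show ?thesis
  proof cases
    case 1
    then have "r i j = 0" using ij assms(1) by (simp add: greedy_policies_def)
    with 1 ij(3) show ?thesis by (simp add: r_id_def)
  next
    case 2
    then have "0 < r i j" using ij nonneg[of i j] by (simp add: r_id_def)
    with 2 ij(1) show ?thesis by (rule that)
  next
    case 3
    have "(\<Sum>j\<le>i. r i j) = r i i + (\<Sum>j<i. r i j)"
      by (simp add: lessThan_Suc_atMost[symmetric])
    moreover have "r i i \<noteq> 1" using ij 3 by (simp add: r_id_def)
    ultimately have "(\<Sum>j<i. r i j) \<noteq> 0"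
      using greedy_policies_row_sum[OF assms(1) ij(1)] by simp
    then obtain j' where j': "j' < i" "r i j' \<noteq> 0" by (meson sum.neutral lessThan_iff)
    then have "0 < r i j'" using ij(1) nonneg[of i j'] by simp
    with j'(1) ij(1) show ?thesis by (rule that)
  qed
qed

lemma f_mis_r_id: "f_mis L \<phi> \<sigma> r_id = 0"
  unfolding f_mis_def r_id_def by (auto intro!: sum.neutral)

lemma f_mis_pos:
  assumes mono: "\<And>i j. i < j \<Longrightarrow> j < L \<Longrightarrow> \<phi> i < \<phi> j"
    and \<sigma>_pos: "\<And>i. i < L \<Longrightarrow> 0 < \<sigma> i"
    and "r \<in> greedy_policies L" "\<not> mat_eq L r r_id"
  shows "0 < f_mis L \<phi> \<sigma> r"
proof -
  obtain i0 j0 where ij0: "j0 < i0" "i0 < L" "0 < r i0 j0"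
    using greedy_policies_off_diagonal[OF assms(3,4)] .
  have nonneg: "0 \<le> \<sigma> i * (\<phi> i - \<phi> j) * r i j" if "i < L" "j \<le> i" for i j
  proof -
    have "0 \<le> r i j" using that assms(3) by (simp add: greedy_policies_def)
    moreover have "\<phi> j \<le> \<phi> i" using that mono[of j i] by (cases "j = i") auto
    ultimately show ?thesis using \<sigma>_pos[OF that(1)] by simp
  qed
  have "0 < \<sigma> i0 * (\<phi> i0 - \<phi> j0) * r i0 j0"
    using ij0 \<sigma>_pos[of i0] mono[of j0 i0] by simp
  also have "\<dots> \<le> (\<Sum>j\<le>i0. \<sigma> i0 * (\<phi> i0 - \<phi> j) * r i0 j)"
    using ij0 nonneg by (intro member_le_sum) auto
  also have "\<dots> \<le> f_mis L \<phi> \<sigma> r"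
    unfolding f_mis_def using ij0 nonneg
    by (intro member_le_sum[where f="\<lambda>i. \<Sum>j\<le>i. \<sigma> i * (\<phi> i - \<phi> j) * r i j"] sum_nonneg) auto
  finally show ?thesis .
qed

lemma U_M_r_id:
  assumes "\<And>i. i < L \<Longrightarrow> 0 \<le> h_coef \<alpha> Cm Cs \<phi> i i"
  shows "U_M \<alpha> Cm Cs L \<phi> \<sigma> r_id \<pi> = (\<Sum>i<L. \<sigma> i * (h_coef \<alpha> Cm Cs \<phi> i i)\<^sup>2)"
proof -
  have diagonal: "(\<Sum>j\<le>i. \<sigma> i * r_id i j * g j) = \<sigma> i * g i" for i and g :: "nat \<Rightarrow> real"
  proof -
    have "(\<Sum>j\<le>i. \<sigma> i * r_id i j * g j) = (\<Sum>j\<le>i. if j = i then \<sigma> i * g i else 0)"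
      by (intro sum.cong) (auto simp: r_id_def)
    then show ?thesis by simp
  qed
  have "U_M \<alpha> Cm Cs L \<phi> \<sigma> r_id \<pi> = (\<Sum>i<L. \<sigma> i * (pos_part (h_coef \<alpha> Cm Cs \<phi> i i))\<^sup>2)"
    unfolding U_M_def f_mis_r_id by (simp only: diagonal mult_zero_right diff_zero)
  also have "\<dots> = (\<Sum>i<L. \<sigma> i * (h_coef \<alpha> Cm Cs \<phi> i i)\<^sup>2)"
    using assms by (intro sum.cong) (auto simp: pos_part_def)
  finally show ?thesis .
qed

lemma h_coef_mono:
  assumes "0 < \<alpha>" "\<phi> i' \<le> \<phi> i" "\<phi> j \<le> \<phi> j'"
  shows "h_coef \<alpha> Cm Cs \<phi> i' j' \<le> h_coef \<alpha> Cm Cs \<phi> i j"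
  unfolding h_coef_def using assms by (intro divide_right_mono) auto

lemma h_coef_diagonal_mono:
  assumes "0 < \<alpha>" "\<phi> i' \<le> \<phi> i"
  shows "h_coef \<alpha> Cm Cs \<phi> i' i' \<le> h_coef \<alpha> Cm Cs \<phi> i i"
  unfolding h_coef_def using assms by (intro divide_right_mono) auto

lemma h_coef_eq_diagonal_plus:
  assumes "0 < \<alpha>"
  shows "h_coef \<alpha> Cm Cs \<phi> i j = h_coef \<alpha> Cm Cs \<phi> i i + (\<phi> i - \<phi> j) / (4 * sqrt \<alpha>)"
  using assms unfolding h_coef_def by (simp add: field_simps)

definition lower_triangle :: "nat \<Rightarrow> (nat \<times> nat) set" where
  "lower_triangle L = (SIGMA i:{..<L}. {..i})"

lemma finite_lower_triangle: "finite (lower_triangle L)"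
  by (simp add: lower_triangle_def)

lemma sum_lower_triangle:
  "(\<Sum>i<L. \<Sum>j\<le>i. g i j) = (\<Sum>(i, j)\<in>lower_triangle L. g i j)"
  by (simp add: lower_triangle_def sum.Sigma)

lemma f_mis_eq_sum_lower_triangle:
  "f_mis L \<phi> \<sigma> r = (\<Sum>(i, j)\<in>lower_triangle L. \<sigma> i * r i j * (\<phi> i - \<phi> j))"
  unfolding f_mis_def sum_lower_triangle by (simp add: mult_ac)

lemma U_M_eq_sum_lower_triangle:
  assumes "0 < \<alpha>"
  shows "U_M \<alpha> Cm Cs L \<phi> \<sigma> r \<pi> = (\<Sum>(i, j)\<in>lower_triangle L. \<sigma> i * r i j *
           (pos_part (h_coef \<alpha> Cm Cs \<phi> i i + (\<phi> i - \<phi> j) / (4 * sqrt \<alpha>) - \<pi> * f_mis L \<phi> \<sigma> r))\<^sup>2)"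
  unfolding U_M_def sum_lower_triangle h_coef_eq_diagonal_plus[OF assms, symmetric] ..

lemma U_M_r_id_eq_sum_lower_triangle:
  assumes "r \<in> greedy_policies L" "\<And>i. i < L \<Longrightarrow> 0 \<le> h_coef \<alpha> Cm Cs \<phi> i i"
  shows "U_M \<alpha> Cm Cs L \<phi> \<sigma> r_id \<pi>
           = (\<Sum>(i, j)\<in>lower_triangle L. \<sigma> i * r i j * (h_coef \<alpha> Cm Cs \<phi> i i)\<^sup>2)"
  using U_M_r_id[OF assms(2)] greedy_policies_weighted_sum[OF assms(1)]
  by (simp add: sum_lower_triangle)

lemma greedy_policies_lower_triangle_weight:
  assumes "r \<in> greedy_policies L" "(\<Sum>i<L. \<sigma> i) = 1"
  shows "(\<Sum>(i, j)\<in>lower_triangle L. \<sigma> i * r i j) = 1"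
  using greedy_policies_weighted_sum[OF assms(1), of \<sigma> "\<lambda>_. 1"] assms(2)
  by (simp add: sum_lower_triangle)

text \<open>Here \<open>h (L - 1) 0\<close> is the largest \<open>h\<^sub>i\<^sub>j\<close> and
  \<open>h (L - 1) (L - 1) = h 0 0 + (\<phi> (L - 1) - \<phi> 0) / (4 * sqrt \<alpha>)\<close>.\<close>
definition truthful_penalty_threshold :: "real \<Rightarrow> real \<Rightarrow> real \<Rightarrow> nat \<Rightarrow> (nat \<Rightarrow> real) \<Rightarrow> real" where
  "truthful_penalty_threshold \<alpha> Cm Cs L \<phi> =
     2 * h_coef \<alpha> Cm Cs \<phi> (L - 1) 0 * h_coef \<alpha> Cm Cs \<phi> (L - 1) (L - 1)
       / (4 * sqrt \<alpha> * (h_coef \<alpha> Cm Cs \<phi> 0 0)\<^sup>2)"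

lemma truthful_penalty_threshold_scaled:
  assumes "0 < \<alpha>"
  shows "2 * h_coef \<alpha> Cm Cs \<phi> (L - 1) 0
           * ((\<phi> (L - 1) - \<phi> 0) / (4 * sqrt \<alpha>) + h_coef \<alpha> Cm Cs \<phi> 0 0)
           / (h_coef \<alpha> Cm Cs \<phi> 0 0)\<^sup>2
         = 4 * sqrt \<alpha> * truthful_penalty_threshold \<alpha> Cm Cs L \<phi>"
proof -
  have "(\<phi> (L - 1) - \<phi> 0) / (4 * sqrt \<alpha>) + h_coef \<alpha> Cm Cs \<phi> 0 0
      = h_coef \<alpha> Cm Cs \<phi> (L - 1) (L - 1)"
    using assms by (simp add: h_coef_def field_simps)
  then show ?thesis
    using assms by (simp add: truthful_penalty_threshold_def)
qed

lemma U_M_less_U_M_r_id: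
  assumes "0 < \<alpha>" "1 \<le> L"
    and mono: "\<And>i j. i < j \<Longrightarrow> j < L \<Longrightarrow> \<phi> i < \<phi> j"
    and \<sigma>_pos: "\<And>i. i < L \<Longrightarrow> 0 < \<sigma> i" and \<sigma>_sum: "(\<Sum>i<L. \<sigma> i) = 1"
    and h_pos: "0 < h_coef \<alpha> Cm Cs \<phi> 0 0"
    and r: "r \<in> greedy_policies L" "\<not> mat_eq L r r_id"
    and \<pi>_gt: "truthful_penalty_threshold \<alpha> Cm Cs L \<phi> < \<pi>"
  shows "U_M \<alpha> Cm Cs L \<phi> \<sigma> r \<pi> < U_M \<alpha> Cm Cs L \<phi> \<sigma> r_id \<pi>"
proof -
  define h where "h = h_coef \<alpha> Cm Cs \<phi>"
  define s where "s = 4 * sqrt \<alpha>"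
  define w where "w = (\<lambda>(i, j). \<sigma> i * r i j)"
  define x where "x = (\<lambda>(i :: nat, j :: nat). h i i)"
  define a where "a = (\<lambda>(i, j). (\<phi> i - \<phi> j) / s)"
  have "0 < s" using \<open>0 < \<alpha>\<close> by (simp add: s_def)
  have \<phi>_le: "\<phi> j \<le> \<phi> i" if "j \<le> i" "i < L" for i j
    using that mono[of j i] by (cases "j = i") auto
  have h_ge: "h 0 0 \<le> h i i" if "i < L" for i
    using h_coef_diagonal_mono[OF \<open>0 < \<alpha>\<close> \<phi>_le[of 0 i]] that by (simp add: h_def)
  have f_eq: "f_mis L \<phi> \<sigma> r = s * (\<Sum>k\<in>lower_triangle L. w k * a k)"
    using \<open>0 < s\<close>
    by (simp add: f_mis_eq_sum_lower_triangle sum_distrib_left w_def a_def case_prod_unfold mult.assoc)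
  then have penalty: "\<pi> * f_mis L \<phi> \<sigma> r = s * \<pi> * (\<Sum>k\<in>lower_triangle L. w k * a k)"
    by simp
  have "U_M \<alpha> Cm Cs L \<phi> \<sigma> r \<pi>
      = (\<Sum>k\<in>lower_triangle L. w k * (pos_part (x k + a k - s * \<pi> * (\<Sum>k\<in>lower_triangle L. w k * a k)))\<^sup>2)"
    unfolding U_M_eq_sum_lower_triangle[OF \<open>0 < \<alpha>\<close>] penalty
    by (simp add: w_def x_def a_def h_def s_def case_prod_unfold)
  also have "\<dots> < (\<Sum>k\<in>lower_triangle L. w k * (x k)\<^sup>2)"
  proof (rule weighted_sq_sum_penalised_less[where c = "h 0 0" and B = "h (L - 1) 0"
        and D = "(\<phi> (L - 1) - \<phi> 0) / s"])
    show "(\<Sum>k\<in>lower_triangle L. w k) = 1"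
      using greedy_policies_lower_triangle_weight[OF r(1) \<sigma>_sum] by (simp add: w_def)
    show "0 < (\<Sum>k\<in>lower_triangle L. w k * a k)"
      using f_eq f_mis_pos[of L \<phi> \<sigma> r, OF mono \<sigma>_pos r] \<open>0 < s\<close>
      by (simp add: zero_less_mult_iff)
    show "2 * h (L - 1) 0 * ((\<phi> (L - 1) - \<phi> 0) / s + h 0 0) / (h 0 0)\<^sup>2 < s * \<pi>"
      using truthful_penalty_threshold_scaled[OF \<open>0 < \<alpha>\<close>] \<pi>_gt \<open>0 < s\<close>
      by (simp add: h_def s_def)
  next
    fix k assume "k \<in> lower_triangle L"
    then obtain i j where k: "k = (i, j)" "j \<le> i" "i < L" by (auto simp: lower_triangle_def)
    then have \<phi>_bounds: "\<phi> 0 \<le> \<phi> j" "\<phi> i \<le> \<phi> (L - 1)"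
      using \<phi>_le \<open>1 \<le> L\<close> by auto
    show "0 \<le> w k" using k r(1) \<sigma>_pos[of i] by (simp add: w_def greedy_policies_def)
    show "h 0 0 \<le> x k" using k h_ge by (simp add: x_def)
    show "0 \<le> a k" using k \<phi>_le \<open>0 < s\<close> by (simp add: a_def)
    show "a k \<le> (\<phi> (L - 1) - \<phi> 0) / s"
      using k \<phi>_bounds \<open>0 < s\<close> by (simp add: a_def divide_right_mono)
    show "x k + a k \<le> h (L - 1) 0"
      using k h_coef_mono[OF \<open>0 < \<alpha>\<close> \<phi>_bounds(2,1)]
      by (simp add: x_def a_def h_def s_def h_coef_eq_diagonal_plus[OF \<open>0 < \<alpha>\<close>, symmetric])
  qed (use h_pos finite_lower_triangle in \<open>simp_all add: h_def\<close>)
  also have "\<dots> = U_M \<alpha> Cm Cs L \<phi> \<sigma> r_id \<pi>"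
  proof -
    have "0 \<le> h_coef \<alpha> Cm Cs \<phi> i i" if "i < L" for i
      using h_ge[OF that] h_pos by (simp add: h_def)
    then show ?thesis
      using U_M_r_id_eq_sum_lower_triangle[OF r(1)] by (simp add: w_def x_def h_def case_prod_unfold)
  qed
  finally show ?thesis .
qed

theorem theorem1:
  fixes \<alpha> Cm Cs :: real and L :: nat and \<phi> \<sigma> :: "nat \<Rightarrow> real"
  assumes "0 < \<alpha>" and "\<alpha> \<le> 1" and "0 \<le> Cm" and "0 \<le> Cs"
    and "1 \<le> L"
    and "\<And>i j. i < j \<Longrightarrow> j < L \<Longrightarrow> \<phi> i < \<phi> j"
    and "\<And>i. i < L \<Longrightarrow> 0 < \<sigma> i"
    and "(\<Sum>i<L. \<sigma> i) = 1"
    and "\<phi> 0 > \<alpha> * (Cs + Cm)"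
  shows "\<exists>\<pi>bar>0. \<forall>\<pi>>\<pi>bar. \<forall>r\<in>greedy_policies L. \<not> mat_eq L r r_id \<longrightarrow>
           U_M \<alpha> Cm Cs L \<phi> \<sigma> r \<pi> < U_M \<alpha> Cm Cs L \<phi> \<sigma> r_id \<pi>"
proof (intro exI conjI allI impI ballI)
  have h_pos: "0 < h_coef \<alpha> Cm Cs \<phi> 0 0"
    using assms(1,9) by (simp add: h_coef_def algebra_simps)
  have "\<phi> 0 \<le> \<phi> (L - 1)"
    using assms(6)[of 0 "L - 1"] assms(5) by (cases "L = 1") auto
  then have "h_coef \<alpha> Cm Cs \<phi> 0 0 \<le> h_coef \<alpha> Cm Cs \<phi> (L - 1) 0"
    "h_coef \<alpha> Cm Cs \<phi> 0 0 \<le> h_coef \<alpha> Cm Cs \<phi> (L - 1) (L - 1)"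
    using assms(1) by (auto intro: h_coef_mono h_coef_diagonal_mono)
  with h_pos show "0 < truthful_penalty_threshold \<alpha> Cm Cs L \<phi>"
    using assms(1) by (simp add: truthful_penalty_threshold_def)
  fix \<pi> r
  assume "truthful_penalty_threshold \<alpha> Cm Cs L \<phi> < \<pi>" "r \<in> greedy_policies L" "\<not> mat_eq L r r_id"
  then show "U_M \<alpha> Cm Cs L \<phi> \<sigma> r \<pi> < U_M \<alpha> Cm Cs L \<phi> \<sigma> r_id \<pi>"
    using U_M_less_U_M_r_id[OF assms(1,5,6,7,8) h_pos] by blast
qed

end
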